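(* Fix $q\in[0,1)$. For $n\in\mathbb{N}$ let $\Pi_n$ be $\pi_{n,q}$-distributed and $T_n=\mathrm{BST}(\Pi_n)$. Define $\psi_R:\mathbb{T}\to[0,1]$ by $\psi_R(v)=1$ if $v\in\{1^k:k\ge0\}$ and $\psi_R(v)=0$ otherwise. Then $T_n$ converges to $\psi_R$ with respect to subtree sizes: for every $r\ge1$ and all $v_1,\dots,v_r\in\mathbb{T}$, $$\big(\tau_{T_n}(v_i)\big)_{1\le i\le r}\longrightarrow\big(\psi_R(v_i)\big)_{1\le i\le r}\quad\text{in distribution}.$$
   Context: $\pi_{n,q}(\sigma)=q^{\mathrm{Inv}(\sigma)}/Z_{n,q}$ on $S_n$, $\mathrm{Inv}(\sigma)=|\{i<j:\sigma(i)>\sigma(j)\}|$, $0^0=1$. $\mathbb{T}$ is the set of finite words over $\{0,1\}$ with empty word $\varnothing$; $1^k$ is the word of $k$ ones ($1^0=\varnothing$); $v\mathbb{T}=\{vw:w\in\mathbb{T}\}$. For a finite sequence $x=(x_1,\dots,x_n)$ of distinct numbers, $\mathrm{BST}(x)=\emptyset$ if $n=0$, else $\{\varnothing\}\cup0\,\mathrm{BST}(x_-)\cup1\,\mathrm{BST}(x_+)$ with $x_-$ (resp. $x_+$) the subsequence of entries smaller (resp. larger) than $x_1$ in original order, and $aS=\{aw:w\in S\}$; $\mathrm{BST}(\sigma)=\mathrm{BST}(\sigma(1),\dots,\sigma(n))$. For a finite nonempty binary tree $T\subseteq\mathbb{T}$, $\tau_T(v)=|T\cap v\mathbb{T}|/|T|$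 for $v\in\mathbb{T}$. *)

theory Defs
  imports "HOL-Probability.Probability" "HOL-Combinatorics.Multiset_Permutations"
begin

text \<open>Permutations of {1..n} are represented by their one-line notation
  [sigma(1), ..., sigma(n)] as elements of permutations_of_set {1..n}.\<close>

definition inv_count :: "nat list \<Rightarrow> nat" where
  "inv_count xs = card {(i, j). i < j \<and> j < length xs \<and> xs ! i > xs ! j}"

definition Z_nq :: "real \<Rightarrow> nat \<Rightarrow> real" where
  "Z_nq q n = (\<Sum>\<sigma>\<in>permutations_of_set {1..n}. q ^ inv_count \<sigma>)"

definition pi_nq :: "real \<Rightarrow> nat \<Rightarrow> nat list \<Rightarrow> real" where
  "pi_nq q n \<sigma> = q ^ inv_count \<sigma> / Z_nq q n"

definition mallows :: "real \<Rightarrow> nat \<Rightarrow> nat list measure" where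
  "mallows q n = density (count_space (permutations_of_set {1..n}))
                          (\<lambda>\<sigma>. ennreal (pi_nq q n \<sigma>))"

text \<open>Words over {0,1} are bool lists (False = 0, True = 1).\<close>
fun bst :: "nat list \<Rightarrow> bool list set" where
  "bst [] = {}"
| "bst (x # xs) = insert [] (((#) False) ` bst (filter (\<lambda>y. y < x) xs)
                           \<union> ((#) True) ` bst (filter (\<lambda>y. y > x) xs))"

definition tau :: "bool list set \<Rightarrow> bool list \<Rightarrow> real" where
  "tau T v = real (card (T \<inter> {v @ w | w. True})) / real (card T)"

definition psi_R :: "bool list \<Rightarrow> real" where
  "psi_R v = (if \<exists>k. v = replicate k True then 1 else 0)"

definition conv_in_distr :: "(nat \<Rightarrow> 'a::topological_space measure) \<Rightarrow> 'a measure \<Rightarrow> bool" where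
  "conv_in_distr M mu \<longleftrightarrow>
     (\<forall>f :: 'a \<Rightarrow> real. continuous_on UNIV f \<and> bounded (range f) \<longrightarrow>
        (\<lambda>n. integral\<^sup>L (M n) f) \<longlonglongrightarrow> integral\<^sup>L mu f)"

end

theory Submission
  imports Defs
begin

text \<open>Let D_k(\<sigma>) be the number of nodes of BST(\<sigma>) outside the subtree of the right-spine
  node 1^k; for every word v there is a k with |\<tau>(v) - \<psi>_R(v)| \<le> D_k / n. If the first
  entry of \<sigma> has rank r, the left subtree has r nodes and the right subtree is the search tree
  of the entries above the first one, so D_(k+1)(\<sigma>) = r + 1 + D_k(right part). Under the
  Mallows law the rank of the first entry is a truncated geometric variable with ratio q, and
  the entries above it are again Mallows distributed. Hence E D_k \<le> k / (1 - q)^2 uniformly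
  in n, so \<tau>(v) converges to \<psi>_R(v) in mean, which implies convergence in distribution to
  the constant vector.\<close>

definition rank_in :: "nat set \<Rightarrow> nat \<Rightarrow> nat" where
  "rank_in S x = card {y\<in>S. y < x}"

definition q_int :: "real \<Rightarrow> nat \<Rightarrow> real" where
  "q_int q m = (\<Sum>i<m. q ^ i)"

fun q_fact :: "real \<Rightarrow> nat \<Rightarrow> real" where
  "q_fact q 0 = 1"
| "q_fact q (Suc m) = q_int q (Suc m) * q_fact q m"

definition mallows_sum :: "real \<Rightarrow> nat set \<Rightarrow> (nat list \<Rightarrow> real) \<Rightarrow> real" where
  "mallows_sum q S h = (\<Sum>\<sigma>\<in>permutations_of_set S. q ^ inv_count \<sigma> * h \<sigma>)"

lemma rank_in_strict_mono: "finite S \<Longrightarrow> x \<in> S \<Longrightarrow> x < y \<Longrightarrow> rank_in S x < rank_in S y"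
  unfolding rank_in_def by (rule psubset_card_mono) auto

lemma bij_betw_rank_in:
  assumes "finite S"
  shows "bij_betw (rank_in S) S {..<card S}"
proof -
  have inj: "inj_on (rank_in S) S"
    by (rule inj_onI) (metis assms less_irrefl linorder_neqE_nat rank_in_strict_mono)
  have "rank_in S ` S \<subseteq> {..<card S}"
    using assms by (auto simp: rank_in_def intro!: psubset_card_mono)
  moreover have "card (rank_in S ` S) = card {..<card S}"
    using card_image[OF inj] by simp
  ultimately have "rank_in S ` S = {..<card S}"
    by (intro card_subset_eq) auto
  with inj show ?thesis by (simp add: bij_betw_def)
qed

lemma sum_rank_in: "finite S \<Longrightarrow> (\<Sum>x\<in>S. g (rank_in S x)) = (\<Sum>i<card S. g i)"
  using sum.reindex_bij_betw[OF bij_betw_rank_in] by blast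

lemma sum_power_rank_in: "finite S \<Longrightarrow> (\<Sum>x\<in>S. q ^ rank_in S x) = q_int q (card S)"
  by (simp add: sum_rank_in q_int_def)

lemma rank_in_lower:
  "x \<in> S \<Longrightarrow> \<not> m < x \<Longrightarrow> rank_in S x = rank_in {y\<in>S. \<not> m < y} x"
  unfolding rank_in_def by (rule arg_cong[where f = card]) auto

lemma rank_in_upper:
  assumes "finite S" "m < x"
  shows "rank_in S x = card {y\<in>S. \<not> m < y} + rank_in {y\<in>S. m < y} x"
proof -
  have "{y\<in>S. y < x} = {y\<in>S. \<not> m < y} \<union> {y\<in>{y\<in>S. m < y}. y < x}"
    using assms(2) by auto
  then show ?thesis
    unfolding rank_in_def using assms(1) by (simp add: card_Un_disjoint disjoint_iff)
qed

lemma inv_count_Cons: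
  assumes "distinct xs"
  shows "inv_count (x # xs) = card {y\<in>set xs. y < x} + inv_count xs"
proof -
  define I where "I = {(i, j). i < j \<and> j < length xs \<and> xs ! i > xs ! j}"
  define J where "J = {j. j < length xs \<and> xs ! j < x}"
  have split: "{(i, j). i < j \<and> j < length (x # xs) \<and> (x # xs) ! i > (x # xs) ! j}
      = (\<lambda>j. (0, Suc j)) ` J \<union> map_prod Suc Suc ` I"
    unfolding I_def J_def
  proof (rule set_eqI, clarify)
    fix i j :: nat
    show "(i, j) \<in> {(i, j). i < j \<and> j < length (x # xs) \<and> (x # xs) ! i > (x # xs) ! j}
        \<longleftrightarrow> (i, j) \<in> (\<lambda>j. (0, Suc j)) ` {j. j < length xs \<and> xs ! j < x}
          \<union> map_prod Suc Suc ` {(i, j). i < j \<and> j < length xs \<and> xs ! i > xs ! j}"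
      by (cases i; cases j) (auto simp: image_iff)
  qed
  have "finite I"
    unfolding I_def by (rule finite_subset[of _ "{..<length xs} \<times> {..<length xs}"]) auto
  moreover have "card J = card {y\<in>set xs. y < x}"
  proof -
    have "(!) xs ` J = {y\<in>set xs. y < x}"
      by (auto simp: J_def in_set_conv_nth)
    moreover have "inj_on ((!) xs) J"
      using assms by (auto simp: J_def inj_on_def nth_eq_iff_index_eq)
    ultimately show ?thesis using card_image by fastforce
  qed
  ultimately show ?thesis
    unfolding inv_count_def split I_def[symmetric]
    by (subst card_Un_disjoint)
      (auto simp: J_def card_image inj_on_def map_prod_def split_beta prod_eq_iff)
qed

lemma mallows_sum_empty [simp]: "mallows_sum q {} h = h []"
  by (simp add: mallows_sum_def inv_count_def)

lemma mallows_sum_cong: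
  "(\<And>\<sigma>. \<sigma> \<in> permutations_of_set S \<Longrightarrow> h \<sigma> = g \<sigma>) \<Longrightarrow> mallows_sum q S h = mallows_sum q S g"
  unfolding mallows_sum_def by (auto intro: sum.cong)

lemma mallows_sum_add_const:
  "mallows_sum q S (\<lambda>\<sigma>. c + h \<sigma>) = c * mallows_sum q S (\<lambda>_. 1) + mallows_sum q S h"
  unfolding mallows_sum_def by (simp add: algebra_simps sum.distrib sum_distrib_left)

text \<open>An entry placed first is inverted exactly with the smaller remaining entries.\<close>
lemma mallows_sum_first:
  assumes "finite S" "S \<noteq> {}"
  shows "mallows_sum q S h = (\<Sum>x\<in>S. q ^ rank_in S x * mallows_sum q (S - {x}) (\<lambda>\<tau>. h (x # \<tau>)))"
proof -
  have inv: "inv_count (x # \<tau>) = rank_in S x + inv_count \<tau>"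
    if "x \<in> S" "\<tau> \<in> permutations_of_set (S - {x})" for x \<tau>
  proof -
    have "{y\<in>set \<tau>. y < x} = {y\<in>S. y < x}"
      using permutations_of_setD(1)[OF that(2)] that(1) by auto
    then show ?thesis
      using inv_count_Cons[OF permutations_of_setD(2)[OF that(2)]] by (simp add: rank_in_def)
  qed
  have "mallows_sum q S h
      = (\<Sum>x\<in>S. \<Sum>\<sigma>\<in>(#) x ` permutations_of_set (S - {x}). q ^ inv_count \<sigma> * h \<sigma>)"
    unfolding mallows_sum_def permutations_of_set_nonempty[OF assms(2)]
    using assms(1) by (intro sum.UNION_disjoint) auto
  also have "\<dots> = (\<Sum>x\<in>S. \<Sum>\<tau>\<in>permutations_of_set (S - {x}). q ^ inv_count (x # \<tau>) * h (x # \<tau>))"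
    by (rule sum.cong[OF refl], subst sum.reindex) (auto simp: inj_on_def)
  finally show ?thesis
    unfolding mallows_sum_def sum_distrib_left by (simp add: inv power_add mult.assoc)
qed

lemma q_int_add: "q_int q (l + m) = q_int q l + q ^ l * q_int q m"
  by (induct m) (simp_all add: q_int_def algebra_simps power_add)

lemma q_int_ge_1: "0 \<le> q \<Longrightarrow> 1 \<le> m \<Longrightarrow> 1 \<le> q_int q m"
  using q_int_add[of q 1 "m - 1"] by (simp add: q_int_def sum_nonneg)

lemma q_fact_pos: "0 \<le> q \<Longrightarrow> 0 < q_fact q m"
  by (induct m) (simp_all add: q_int_ge_1 order.strict_trans2)

lemma mallows_sum_one: "finite S \<Longrightarrow> mallows_sum q S (\<lambda>_. 1) = q_fact q (card S)"
proof (induction "card S" arbitrary: S)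
  case (Suc n)
  then have "S \<noteq> {}" by auto
  with Suc have "mallows_sum q S (\<lambda>_. 1) = (\<Sum>x\<in>S. q ^ rank_in S x * q_fact q n)"
    by (simp add: mallows_sum_first flip: Suc.hyps(2))
  also have "\<dots> = q_int q (card S) * q_fact q n"
    by (simp add: sum_distrib_right[symmetric] sum_power_rank_in[OF Suc.prems])
  finally show ?case by (simp flip: Suc.hyps)
qed simp

lemma mallows_sum_first_split:
  fixes m :: nat
  assumes "finite A" "A \<noteq> {}"
  defines "L \<equiv> {y\<in>A. \<not> m < y}" and "B \<equiv> {y\<in>A. m < y}"
  shows "mallows_sum q A h
    = (\<Sum>x\<in>L. q ^ rank_in L x * mallows_sum q (A - {x}) (\<lambda>\<tau>. h (x # \<tau>)))
      + q ^ card L * (\<Sum>x\<in>B. q ^ rank_in B x * mallows_sum q (A - {x}) (\<lambda>\<tau>. h (x # \<tau>)))"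
proof -
  let ?t = "\<lambda>x. mallows_sum q (A - {x}) (\<lambda>\<tau>. h (x # \<tau>))"
  have "A = L \<union> B" "L \<inter> B = {}" "finite L" "finite B"
    using assms(1) by (auto simp: L_def B_def)
  then have "mallows_sum q A h = (\<Sum>x\<in>L. q ^ rank_in A x * ?t x) + (\<Sum>x\<in>B. q ^ rank_in A x * ?t x)"
    using mallows_sum_first[OF assms(1,2)] by (simp add: sum.union_disjoint)
  also have "(\<Sum>x\<in>L. q ^ rank_in A x * ?t x) = (\<Sum>x\<in>L. q ^ rank_in L x * ?t x)"
  proof (intro sum.cong refl)
    fix x
    assume "x \<in> L"
    with rank_in_lower[of x A m] show "q ^ rank_in A x * ?t x = q ^ rank_in L x * ?t x"
      by (simp add: L_def)
  qed
  also have "(\<Sum>x\<in>B. q ^ rank_in A x * ?t x) = q ^ card L * (\<Sum>x\<in>B. q ^ rank_in B x * ?t x)"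
    unfolding sum_distrib_left
  proof (intro sum.cong refl)
    fix x
    assume "x \<in> B"
    with rank_in_upper[OF assms(1), of m x] show "q ^ rank_in A x * ?t x = q ^ card L * (q ^ rank_in B x * ?t x)"
      by (simp add: L_def B_def power_add)
  qed
  finally show ?thesis .
qed

text \<open>The restriction of a Mallows permutation to an upper set of its entries is again
  Mallows distributed.\<close>
lemma mallows_sum_filter_greater:
  assumes "finite A"
  shows "q_fact q (card {y\<in>A. m < y}) * mallows_sum q A (\<lambda>\<tau>. h (filter (\<lambda>y. m < y) \<tau>))
         = q_fact q (card A) * mallows_sum q {y\<in>A. m < y} h"
  using assms
proof (induction "card A" arbitrary: A h)
  case (Suc n)
  define L where "L = {y\<in>A. \<not> m < y}"
  define B where "B = {y\<in>A. m < y}"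
  let ?f = "filter (\<lambda>y. m < y)"
  have "A = L \<union> B" "L \<inter> B = {}" "finite L" "finite B" "A \<noteq> {}"
    using Suc.prems Suc.hyps(2) by (auto simp: L_def B_def)
  then have card_A: "card A = card L + card B"
    by (simp add: card_Un_disjoint)
  have lower: "q_fact q (card B) * mallows_sum q (A - {x}) (\<lambda>\<tau>. h (?f (x # \<tau>)))
      = q_fact q n * mallows_sum q B h" if "x \<in> L" for x
  proof -
    have "\<not> m < x" "{y\<in>A - {x}. m < y} = B" "card (A - {x}) = n"
      using that Suc.hyps(2) by (auto simp: B_def L_def)
    with Suc.hyps(1)[of "A - {x}" h] Suc.prems show ?thesis
      by simp
  qed
  have upper: "q_fact q (card B) * mallows_sum q (A - {x}) (\<lambda>\<tau>. h (?f (x # \<tau>)))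
      = q_int q (card B) * q_fact q n * mallows_sum q (B - {x}) (\<lambda>\<tau>. h (x # \<tau>))" if "x \<in> B" for x
  proof -
    have "m < x" "{y\<in>A - {x}. m < y} = B - {x}" "card (A - {x}) = n"
      using that Suc.hyps(2) by (auto simp: B_def)
    moreover have "q_fact q (card B) = q_int q (card B) * q_fact q (card (B - {x}))"
      using card_Suc_Diff1[OF \<open>finite B\<close> that] by (metis q_fact.simps(2))
    ultimately show ?thesis
      using Suc.hyps(1)[of "A - {x}" "\<lambda>\<tau>. h (x # \<tau>)"] Suc.prems by simp
  qed
  let ?t = "\<lambda>x. q_fact q (card B) * mallows_sum q (A - {x}) (\<lambda>\<tau>. h (?f (x # \<tau>)))"
  have "q_fact q (card B) * mallows_sum q A (\<lambda>\<tau>. h (?f \<tau>))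
      = (\<Sum>x\<in>L. q ^ rank_in L x * ?t x) + q ^ card L * (\<Sum>x\<in>B. q ^ rank_in B x * ?t x)"
    unfolding mallows_sum_first_split[OF Suc.prems \<open>A \<noteq> {}\<close>, where m = m, folded L_def B_def]
    by (simp add: algebra_simps sum_distrib_left)
  also have "\<dots> = (\<Sum>x\<in>L. q ^ rank_in L x * (q_fact q n * mallows_sum q B h))
        + q ^ card L * (\<Sum>x\<in>B. q ^ rank_in B x
            * (q_int q (card B) * q_fact q n * mallows_sum q (B - {x}) (\<lambda>\<tau>. h (x # \<tau>))))"
    by (simp only: lower upper cong: sum.cong)
  also have "(\<Sum>x\<in>L. q ^ rank_in L x * (q_fact q n * mallows_sum q B h))
      = q_int q (card L) * q_fact q n * mallows_sum q B h"
    by (simp add: sum_distrib_right[symmetric] sum_power_rank_in \<open>finite L\<close>)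
  also have "(\<Sum>x\<in>B. q ^ rank_in B x
            * (q_int q (card B) * q_fact q n * mallows_sum q (B - {x}) (\<lambda>\<tau>. h (x # \<tau>))))
      = q_int q (card B) * q_fact q n * mallows_sum q B h"
  proof (cases "B = {}")
    case False
    then show ?thesis
      by (simp add: mallows_sum_first[OF \<open>finite B\<close>] sum_distrib_left ac_simps)
  qed (simp add: q_int_def)
  also have "q_int q (card L) * q_fact q n * mallows_sum q B h
      + q ^ card L * (q_int q (card B) * q_fact q n * mallows_sum q B h)
      = q_fact q (card A) * mallows_sum q B h"
  proof -
    have "q_fact q (card A) = q_int q (card L + card B) * q_fact q n"
      by (metis card_A Suc.hyps(2) q_fact.simps(2))
    then show ?thesis
      unfolding q_int_add by (simp add: algebra_simps)
  qed
  finally show ?case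
    by (simp add: B_def)
qed simp

lemma mallows_sum_filter_greater_le:
  assumes "0 \<le> q" "finite A"
    and "mallows_sum q {y\<in>A. m < y} h \<le> c * q_fact q (card {y\<in>A. m < y})"
  shows "mallows_sum q A (\<lambda>\<tau>. h (filter (\<lambda>y. m < y) \<tau>)) \<le> c * q_fact q (card A)"
proof -
  let ?B = "{y\<in>A. m < y}"
  have "q_fact q (card ?B) * mallows_sum q A (\<lambda>\<tau>. h (filter (\<lambda>y. m < y) \<tau>))
      \<le> q_fact q (card ?B) * (c * q_fact q (card A))"
    unfolding mallows_sum_filter_greater[OF assms(2)]
    using mult_left_mono[OF assms(3) less_imp_le[OF q_fact_pos[OF assms(1)]]] by (simp add: ac_simps)
  then show ?thesis
    using q_fact_pos[OF assms(1)] by simp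
qed

definition words_with_prefix :: "bool list \<Rightarrow> bool list set" where
  "words_with_prefix v = {v @ w | w. True}"

definition spine_deficit :: "nat \<Rightarrow> nat list \<Rightarrow> nat" where
  "spine_deficit k \<sigma> = card (bst \<sigma> - words_with_prefix (replicate k True))"

lemma finite_bst: "finite (bst xs)"
  by (induction xs rule: bst.induct) auto

lemma card_insert_Nil_Cons_images:
  assumes "finite A" "finite B"
  shows "card (insert [] ((#) False ` A \<union> (#) True ` B)) = Suc (card A + card B)"
proof -
  have "card ((#) False ` A \<union> (#) True ` B) = card A + card B"
    using assms by (subst card_Un_disjoint) (auto simp: card_image)
  with assms show ?thesis
    by (simp add: image_iff)
qed

lemma card_bst: "distinct xs \<Longrightarrow> card (bst xs) = length xs"
proof (induction xs rule: bst.induct)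
  case (2 x xs)
  have "filter (\<lambda>y. x < y) xs = filter (\<lambda>y. \<not> y < x) xs"
    by (rule filter_cong) (use "2.prems" in \<open>auto simp: not_less le_less\<close>)
  then have "length (filter (\<lambda>y. y < x) xs) + length (filter (\<lambda>y. x < y) xs) = length xs"
    by (simp add: sum_length_filter_compl)
  with 2 show ?case
    by (simp add: card_insert_Nil_Cons_images finite_bst)
qed simp

lemma spine_deficit_Cons_Suc:
  assumes "distinct (x # xs)"
  shows "spine_deficit (Suc k) (x # xs)
    = Suc (length (filter (\<lambda>y. y < x) xs) + spine_deficit k (filter (\<lambda>y. x < y) xs))"
proof -
  let ?L = "filter (\<lambda>y. y < x) xs" and ?R = "filter (\<lambda>y. x < y) xs"
  have "bst (x # xs) - words_with_prefix (replicate (Suc k) True)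
      = insert [] ((#) False ` bst ?L \<union> (#) True ` (bst ?R - words_with_prefix (replicate k True)))"
    by (auto simp: words_with_prefix_def)
  then show ?thesis
    unfolding spine_deficit_def using assms
    by (simp add: card_insert_Nil_Cons_images finite_bst card_bst)
qed

lemma sum_power_mult_Suc_le:
  fixes q :: real
  assumes "0 \<le> q" "q < 1"
  shows "(\<Sum>i<m. q ^ i * (real i + 1)) \<le> 1 / (1 - q)\<^sup>2"
proof -
  have closed_form: "(1 - q)\<^sup>2 * (\<Sum>i<m. q ^ i * (real i + 1)) = 1 - q ^ m * (1 + real m * (1 - q))"
    by (induct m) (simp_all add: algebra_simps power2_eq_square)
  have "0 \<le> q ^ m * (1 + real m * (1 - q))"
    using assms by simp
  with closed_form assms show ?thesis
    by (simp add: field_simps)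
qed

lemma spine_deficit_Suc_first:
  assumes "x \<in> S" "\<tau> \<in> permutations_of_set (S - {x})"
  shows "spine_deficit (Suc k) (x # \<tau>) = Suc (rank_in S x + spine_deficit k (filter (\<lambda>y. x < y) \<tau>))"
proof -
  have \<tau>: "set \<tau> = S - {x}" "distinct \<tau>"
    using assms(2) by (auto simp: permutations_of_set_def)
  moreover have "{y. y < x} \<inter> set \<tau> = {y\<in>S. y < x}"
    using \<tau>(1) by auto
  ultimately have "length (filter (\<lambda>y. y < x) \<tau>) = rank_in S x"
    by (simp add: distinct_length_filter rank_in_def)
  with \<tau> show ?thesis
    by (simp add: spine_deficit_Cons_Suc)
qed

lemma mallows_sum_spine_deficit_first_le:
  assumes "0 \<le> q" "finite S" "x \<in> S"
    and deficit_le: "\<And>A. finite A \<Longrightarrow> mallows_sum q A (\<lambda>\<sigma>. real (spine_deficit k \<sigma>)) \<le> c * q_fact q (card A)"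
  shows "mallows_sum q (S - {x}) (\<lambda>\<tau>. real (spine_deficit (Suc k) (x # \<tau>)))
    \<le> q_fact q (card S - 1) * (real (rank_in S x) + 1 + c)"
proof -
  let ?g = "\<lambda>\<tau>. real (spine_deficit k (filter (\<lambda>y. x < y) \<tau>))"
  have "mallows_sum q (S - {x}) (\<lambda>\<tau>. real (spine_deficit (Suc k) (x # \<tau>)))
      = mallows_sum q (S - {x}) (\<lambda>\<tau>. (real (rank_in S x) + 1) + ?g \<tau>)"
    using assms(3) by (intro mallows_sum_cong) (simp add: spine_deficit_Suc_first)
  also have "\<dots> = (real (rank_in S x) + 1) * q_fact q (card S - 1) + mallows_sum q (S - {x}) ?g"
    using assms(2,3) by (simp add: mallows_sum_add_const mallows_sum_one)
  also have "mallows_sum q (S - {x}) ?g \<le> c * q_fact q (card S - 1)"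
    using mallows_sum_filter_greater_le[OF assms(1) _ deficit_le, of "S - {x}" x] assms(2,3) by simp
  finally show ?thesis
    by (simp add: algebra_simps)
qed

lemma mallows_sum_spine_deficit_le:
  assumes q: "0 \<le> q" "q < 1" and "finite S"
  shows "mallows_sum q S (\<lambda>\<sigma>. real (spine_deficit k \<sigma>)) \<le> real k / (1 - q)\<^sup>2 * q_fact q (card S)"
  using \<open>finite S\<close>
proof (induction k arbitrary: S)
  case 0
  then show ?case
    by (simp add: spine_deficit_def words_with_prefix_def mallows_sum_def)
next
  case (Suc k)
  define C where "C = 1 / (1 - q)\<^sup>2"
  show ?case
  proof (cases "S = {}")
    case False
    define n where "n = card S - 1"
    have card_S: "card S = Suc n"
      using False Suc.prems by (simp add: n_def card_gt_0_iff)
    have "mallows_sum q S (\<lambda>\<sigma>. real (spine_deficit (Suc k) \<sigma>))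
        \<le> (\<Sum>x\<in>S. q ^ rank_in S x * (q_fact q n * (real (rank_in S x) + 1 + real k * C)))"
      unfolding mallows_sum_first[OF Suc.prems False] n_def
      using mallows_sum_spine_deficit_first_le[OF q(1) Suc.prems _ Suc.IH] q(1)
      by (intro sum_mono mult_left_mono) (simp_all add: C_def)
    also have "\<dots> = q_fact q n * (\<Sum>i<card S. q ^ i * (real i + 1) + real k * C * q ^ i)"
      unfolding sum_distrib_left
      by (rule sum_rank_in[OF Suc.prems, where g = "\<lambda>i. q ^ i * (q_fact q n * (real i + 1 + real k * C))", THEN trans])
        (simp add: algebra_simps)
    also have "\<dots> = q_fact q n * ((\<Sum>i<card S. q ^ i * (real i + 1)) + real k * C * q_int q (card S))"
      by (simp add: q_int_def sum.distrib sum_distrib_left)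
    also have "\<dots> \<le> q_fact q n * (C * q_int q (card S) + real k * C * q_int q (card S))"
    proof -
      have "(\<Sum>i<card S. q ^ i * (real i + 1)) \<le> C * 1"
        using sum_power_mult_Suc_le[OF q] by (simp add: C_def)
      also have "\<dots> \<le> C * q_int q (card S)"
        using q_int_ge_1[OF q(1), of "card S"] card_S by (intro mult_left_mono) (auto simp: C_def)
      finally show ?thesis
        using q_fact_pos[OF q(1), of n] by simp
    qed
    also have "\<dots> = real (Suc k) / (1 - q)\<^sup>2 * q_fact q (card S)"
      by (simp add: card_S C_def algebra_simps add_divide_distrib)
    finally show ?thesis .
  qed (simp add: spine_deficit_def)
qed

lemma tau_mult_card: "finite T \<Longrightarrow> tau T v * card T = card (T \<inter> words_with_prefix v)"
  by (cases "T = {}") (simp_all add: tau_def words_with_prefix_def)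

lemma tau_bst_replicate_True:
  assumes "distinct \<sigma>"
  shows "(1 - tau (bst \<sigma>) (replicate k True)) * length \<sigma> = spine_deficit k \<sigma>"
proof -
  let ?T = "bst \<sigma>" and ?P = "words_with_prefix (replicate k True)"
  have split: "real (card ?T) = card (?T \<inter> ?P) + card (?T - ?P)"
    using card_Int_Diff[OF finite_bst] by (metis of_nat_add)
  have "(1 - tau ?T (replicate k True)) * card ?T = real (card ?T) - card (?T \<inter> ?P)"
    using tau_mult_card[OF finite_bst] by (simp add: left_diff_distrib)
  with split show ?thesis
    by (simp add: spine_deficit_def card_bst[OF assms, symmetric])
qed

lemma tau_bst_le_spine_deficit:
  assumes "distinct \<sigma>"
  shows "tau (bst \<sigma>) (replicate j True @ False # w) * length \<sigma> \<le> spine_deficit (Suc j) \<sigma>"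
proof -
  have "bst \<sigma> \<inter> words_with_prefix (replicate j True @ False # w)
      \<subseteq> bst \<sigma> - words_with_prefix (replicate (Suc j) True)"
    by (auto simp: words_with_prefix_def replicate_append_same[symmetric])
  then show ?thesis
    using tau_mult_card[OF finite_bst, of \<sigma>] assms
    by (simp add: spine_deficit_def card_bst card_mono finite_bst)
qed

lemma replicate_True_or_first_False:
  obtains k where "v = replicate k True" | j w where "v = replicate j True @ False # w"
proof (induction v arbitrary: thesis)
  case Nil
  then show ?case by simp
next
  case (Cons b v)
  show ?case
  proof (cases b)
    case True
    show ?thesis
    proof (rule Cons.IH)
      fix k
      assume "v = replicate k True"
      then show thesis
        using Cons.prems(1)[of "Suc k"] True by simp
    next
      fix j w
      assume "v = replicate j True @ False # w"
      then show thesis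
        using Cons.prems(2)[of "Suc j" w] True by simp
    qed
  qed (use Cons.prems in force)
qed

lemma tau_bst_psi_R_error_le:
  "\<exists>k. \<forall>\<sigma>. distinct \<sigma> \<longrightarrow> \<bar>tau (bst \<sigma>) v - psi_R v\<bar> * length \<sigma> \<le> spine_deficit k \<sigma>"
proof (cases v rule: replicate_True_or_first_False)
  case (1 k)
  have "\<bar>tau (bst \<sigma>) v - psi_R v\<bar> * length \<sigma> = \<bar>(1 - tau (bst \<sigma>) v) * length \<sigma>\<bar>" for \<sigma>
    using 1 by (simp add: psi_R_def abs_mult abs_minus_commute)
  with 1 show ?thesis
    by (auto simp: tau_bst_replicate_True)
next
  case (2 j w)
  then have "psi_R v = 0"
    by (auto simp: psi_R_def dest!: arg_cong[where f = "\<lambda>u. False \<in> set u"])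
  moreover have "0 \<le> tau T v" for T
    by (simp add: tau_def)
  ultimately show ?thesis
    using 2 tau_bst_le_spine_deficit by (intro exI[of _ "Suc j"]) simp
qed

lemma Z_nq_eq_q_fact: "Z_nq q n = q_fact q n"
  using mallows_sum_one[of "{1..n}" q] by (simp add: Z_nq_def mallows_sum_def)

lemma space_mallows [simp]: "space (mallows q n) = permutations_of_set {1..n}"
  by (simp add: mallows_def)

lemma pi_nq_nonneg: "0 \<le> q \<Longrightarrow> 0 \<le> pi_nq q n \<sigma>"
  by (simp add: pi_nq_def Z_nq_eq_q_fact q_fact_pos less_imp_le)

lemma integrable_mallows: "0 \<le> q \<Longrightarrow> integrable (mallows q n) (f :: nat list \<Rightarrow> real)"
  unfolding mallows_def by (subst integrable_density) (auto simp: pi_nq_nonneg integrable_count_space)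

lemma integral_mallows:
  assumes "0 \<le> q"
  shows "integral\<^sup>L (mallows q n) f = mallows_sum q {1..n} f / q_fact q n"
proof -
  have "integral\<^sup>L (mallows q n) f = (\<Sum>\<sigma>\<in>permutations_of_set {1..n}. pi_nq q n \<sigma> * f \<sigma>)"
    unfolding mallows_def using assms
    by (simp add: integral_density pi_nq_nonneg lebesgue_integral_count_space_finite)
  then show ?thesis
    by (simp add: mallows_sum_def pi_nq_def Z_nq_eq_q_fact sum_divide_distrib)
qed

lemma prob_space_mallows:
  assumes "0 \<le> q"
  shows "prob_space (mallows q n)"
proof
  have "emeasure (mallows q n) (space (mallows q n)) = (\<Sum>\<sigma>\<in>permutations_of_set {1..n}. ennreal (pi_nq q n \<sigma>))"
    by (simp add: mallows_def emeasure_density nn_integral_count_space_finite)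
  also have "\<dots> = ennreal (\<Sum>\<sigma>\<in>permutations_of_set {1..n}. pi_nq q n \<sigma>)"
    using pi_nq_nonneg[OF assms] by simp
  also have "\<dots> = ennreal (mallows_sum q {1..n} (\<lambda>_. 1) / q_fact q n)"
    by (simp add: mallows_sum_def pi_nq_def Z_nq_eq_q_fact sum_divide_distrib)
  also have "\<dots> = 1"
    using q_fact_pos[OF assms, of n] by (simp add: mallows_sum_one)
  finally show "emeasure (mallows q n) (space (mallows q n)) = 1" .
qed

lemma integral_mallows_spine_deficit_le:
  assumes "0 \<le> q" "q < 1"
  shows "(\<integral>\<sigma>. real (spine_deficit k \<sigma>) \<partial>mallows q n) \<le> real k / (1 - q)\<^sup>2"
  using mallows_sum_spine_deficit_le[OF assms, of "{1..n}" k] q_fact_pos[OF assms(1), of n]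
  by (simp add: integral_mallows[OF assms(1)] divide_le_eq)

lemma mallows_tau_bst_psi_R_L1:
  assumes "0 \<le> q" "q < 1"
  shows "(\<lambda>n. \<integral>\<sigma>. \<bar>tau (bst \<sigma>) v - psi_R v\<bar> \<partial>mallows q n) \<longlonglongrightarrow> 0"
proof -
  let ?err = "\<lambda>n. \<integral>\<sigma>. \<bar>tau (bst \<sigma>) v - psi_R v\<bar> \<partial>mallows q n"
  obtain k where k: "\<And>\<sigma>. distinct \<sigma> \<Longrightarrow> \<bar>tau (bst \<sigma>) v - psi_R v\<bar> * length \<sigma> \<le> spine_deficit k \<sigma>"
    using tau_bst_psi_R_error_le by blast
  have bound: "?err n \<le> real k / (1 - q)\<^sup>2 / real n" if "0 < n" for n
  proof -
    have "?err n \<le> (\<integral>\<sigma>. real (spine_deficit k \<sigma>) / n \<partial>mallows q n)"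
    proof (rule integral_mono)
      fix \<sigma> assume "\<sigma> \<in> space (mallows q n)"
      then have "distinct \<sigma>" "length \<sigma> = n"
        by (auto dest: permutations_of_setD length_finite_permutations_of_set)
      with k[of \<sigma>] that show "\<bar>tau (bst \<sigma>) v - psi_R v\<bar> \<le> real (spine_deficit k \<sigma>) / n"
        by (simp add: le_divide_eq)
    qed (simp_all add: integrable_mallows assms)
    also have "\<dots> \<le> real k / (1 - q)\<^sup>2 / real n"
      using divide_right_mono[OF integral_mallows_spine_deficit_le[OF assms]] by simp
    finally show ?thesis .
  qed
  have "eventually (\<lambda>n. 0 \<le> ?err n) sequentially"
    by simp
  moreover have "eventually (\<lambda>n. ?err n \<le> real k / (1 - q)\<^sup>2 / real n) sequentially"
    using bound by (intro eventually_sequentiallyI[of 1]) simp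
  ultimately show ?thesis
    by (rule tendsto_sandwich[OF _ _ tendsto_const lim_const_over_n])
qed

lemma conv_in_distr_return_if_L1:
  fixes X :: "nat \<Rightarrow> 'b \<Rightarrow> 'a::real_normed_vector"
  assumes prob: "\<And>n. prob_space (M n)" and meas: "\<And>n. X n \<in> borel_measurable (M n)"
    and int: "\<And>n. integrable (M n) (\<lambda>x. norm (X n x - c))"
    and lim: "(\<lambda>n. \<integral>x. norm (X n x - c) \<partial>M n) \<longlonglongrightarrow> 0"
  shows "conv_in_distr (\<lambda>n. distr (M n) borel (X n)) (return borel c)"
  unfolding conv_in_distr_def
proof (intro allI impI)
  fix f :: "'a \<Rightarrow> real"
  assume f: "continuous_on UNIV f \<and> bounded (range f)"
  then have f_meas [measurable]: "f \<in> borel_measurable borel"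
    using borel_measurable_continuous_onI by blast
  obtain B where B: "\<And>y. \<bar>f y\<bar> \<le> B"
    using f by (auto simp: bounded_iff)
  have "(\<lambda>n. \<integral>x. f (X n x) \<partial>M n) \<longlonglongrightarrow> f c"
  proof (rule tendstoI)
    fix e :: real
    assume "0 < e"
    have "isCont f c"
      using f by (simp add: continuous_on_eq_continuous_at)
    then obtain d where "0 < d" and d: "\<And>y. dist y c < d \<Longrightarrow> dist (f y) (f c) < e / 2"
      using \<open>0 < e\<close> unfolding continuous_at_eps_delta by (meson half_gt_zero)
    define K where "K = 2 * B / d"
    have "0 \<le> K"
      using B[of c] \<open>0 < d\<close> by (simp add: K_def)
    have pointwise: "\<bar>f y - f c\<bar> \<le> e / 2 + K * norm (y - c)" for y
    proof (cases "dist y c < d")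
      case True
      moreover have "0 \<le> K * norm (y - c)"
        using \<open>0 \<le> K\<close> by simp
      ultimately show ?thesis
        using d[of y] by (simp add: dist_real_def)
    next
      case False
      have "2 * B = K * d"
        using \<open>0 < d\<close> by (simp add: K_def)
      also have "\<dots> \<le> K * norm (y - c)"
        using False \<open>0 \<le> K\<close> by (intro mult_left_mono) (auto simp: dist_norm)
      finally show ?thesis
        using B[of y] B[of c] \<open>0 < e\<close> by linarith
    qed
    have "eventually (\<lambda>n. K * (\<integral>x. norm (X n x - c) \<partial>M n) < e / 2) sequentially"
      by (rule order_tendstoD(2)[OF tendsto_mult_right_zero[OF lim]]) (use \<open>0 < e\<close> in simp)
    then show "eventually (\<lambda>n. dist (\<integral>x. f (X n x) \<partial>M n) (f c) < e) sequentially"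
    proof (rule eventually_mono)
      fix n
      assume small: "K * (\<integral>x. norm (X n x - c) \<partial>M n) < e / 2"
      interpret prob_space "M n" by (rule prob)
      have int_f: "integrable (M n) (\<lambda>x. f (X n x))"
        using B meas[of n] by (intro integrable_const_bound[where B = B]) auto
      have "dist (\<integral>x. f (X n x) \<partial>M n) (f c) = \<bar>\<integral>x. f (X n x) - f c \<partial>M n\<bar>"
        using int_f by (simp add: dist_real_def prob_space)
      also have "\<dots> \<le> (\<integral>x. \<bar>f (X n x) - f c\<bar> \<partial>M n)"
        using integral_norm_bound[of "M n" "\<lambda>x. f (X n x) - f c"] by simp
      also have "\<dots> \<le> (\<integral>x. e / 2 + K * norm (X n x - c) \<partial>M n)"
        using int_f int[of n] pointwise by (intro integral_mono) auto
      also have "\<dots> = e / 2 + K * (\<integral>x. norm (X n x - c) \<partial>M n)"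
        using int[of n] by (simp add: prob_space)
      finally show "dist (\<integral>x. f (X n x) \<partial>M n) (f c) < e"
        using small by simp
    qed
  qed
  then show "(\<lambda>n. \<integral>y. f y \<partial>distr (M n) borel (X n)) \<longlonglongrightarrow> (\<integral>y. f y \<partial>return borel c)"
    using meas by (simp add: integral_distr integral_return)
qed

lemma conv_in_distr_return_if_L1_cart:
  fixes X :: "nat \<Rightarrow> 'b \<Rightarrow> real ^ 'n"
  assumes "\<And>n. prob_space (M n)" and "\<And>n. X n \<in> borel_measurable (M n)"
    and "\<And>n. integrable (M n) (\<lambda>x. norm (X n x - c))"
    and int_coord: "\<And>n i. integrable (M n) (\<lambda>x. \<bar>X n x $ i - c $ i\<bar>)"
    and lim_coord: "\<And>i. (\<lambda>n. \<integral>x. \<bar>X n x $ i - c $ i\<bar> \<partial>M n) \<longlonglongrightarrow> 0"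
  shows "conv_in_distr (\<lambda>n. distr (M n) borel (X n)) (return borel c)"
proof (rule conv_in_distr_return_if_L1[OF assms(1-3)])
  let ?err = "\<lambda>n i. \<integral>x. \<bar>X n x $ i - c $ i\<bar> \<partial>M n"
  have "(\<integral>x. norm (X n x - c) \<partial>M n) \<le> (\<integral>x. (\<Sum>i\<in>UNIV. \<bar>X n x $ i - c $ i\<bar>) \<partial>M n)" for n
  proof (rule integral_mono)
    show "norm (X n x - c) \<le> (\<Sum>i\<in>UNIV. \<bar>X n x $ i - c $ i\<bar>)" for x
      using norm_le_l1_cart[of "X n x - c"] by simp
  qed (use assms(3) int_coord in auto)
  also have "(\<integral>x. (\<Sum>i\<in>UNIV. \<bar>X n x $ i - c $ i\<bar>) \<partial>M n) = (\<Sum>i\<in>UNIV. ?err n i)" for n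
    using int_coord by simp
  finally have bound: "(\<integral>x. norm (X n x - c) \<partial>M n) \<le> (\<Sum>i\<in>UNIV. ?err n i)" for n .
  show "(\<lambda>n. \<integral>x. norm (X n x - c) \<partial>M n) \<longlonglongrightarrow> 0"
    by (rule tendsto_sandwich[OF _ _ tendsto_const tendsto_null_sum[where f = ?err and I = UNIV]])
      (use bound lim_coord in simp_all)
qed

theorem theorem1p5:
  fixes q :: real and v :: "bool list ^ 'r"
  assumes "0 \<le> q" and "q < 1"
  shows "conv_in_distr
           (\<lambda>n. distr (mallows q n) borel (\<lambda>\<sigma>. \<chi> i. tau (bst \<sigma>) (v $ i)))
           (return borel (\<chi> i. psi_R (v $ i)))"
proof (rule conv_in_distr_return_if_L1_cart)
  show "(\<lambda>n. \<integral>\<sigma>. \<bar>(\<chi> i. tau (bst \<sigma>) (v $ i)) $ i - (\<chi> i. psi_R (v $ i)) $ i\<bar> \<partial>mallows q n)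
      \<longlonglongrightarrow> 0" for i
    using mallows_tau_bst_psi_R_L1[OF assms] by simp
  show "(\<lambda>\<sigma>. \<chi> i. tau (bst \<sigma>) (v $ i)) \<in> borel_measurable (mallows q n)" for n
    by (simp add: mallows_def)
qed (use assms(1) in \<open>simp_all add: prob_space_mallows integrable_mallows\<close>)

end
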